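(* Let $\mathbb{D}=\{z\in\mathbb{C}:|z|<1\}$. For $\beta\in(1,\tfrac{11}{8}]$ let $$\mathcal{P}(\beta)=\Big\{f=h+\overline{g}\in\mathcal{H}:\ g'(z)=zh'(z)\ \text{and}\ \operatorname{Re}\Big(1+\frac{zh''(z)}{h'(z)}\Big)<\beta\ \text{for all } z\in\mathbb{D}\Big\}.$$ Then for every $\beta\in(1,\tfrac{11}{8}]$ the class $\mathcal{P}(\beta)$ contains a function that is not univalent in $\mathbb{D}$. More precisely, for each $\gamma\in(1,\tfrac74]$ the harmonic function $f_\gamma=h+\overline{g}$ with $$h(z)=\frac{1}{\gamma}\big[1-(1-z)^{\gamma}\big],\qquad g(z)=\frac{1}{\gamma(1+\gamma)}\big[1-(1+\gamma z)(1-z)^{\gamma}\big]$$ (principal branches) belongs to $\mathcal{P}((1+\gamma)/2)$, hence to $\mathcal{P}(\beta)$ for every $\beta\ge(1+\gamma)/2$, and $f_\gamma$ is not univalent in $\mathbb{D}$.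
   Context: $\mathcal{H}$ denotes the class of complex-valued harmonic functions $f=h+\overline{g}$ on $\mathbb{D}$, with $h,g$ analytic in $\mathbb{D}$, normalized by $f(0)=0$ and $f_z(0)=1$, i.e. $f(z)=z+\sum_{k\ge2}a_kz^k+\overline{\sum_{k\ge1}b_kz^k}$. *)

theory Defs
  imports "HOL-Analysis.Analysis"
begin

abbreviation unit_disc :: "complex set" where
  "unit_disc \<equiv> ball 0 1"

text \<open>Membership in the class P(beta): f = h + conj g on the unit disc with h, g analytic,
  normalised as in the class H (h(0) = g(0) = 0, h'(0) = 1), g' = z h', and
  Re(1 + z h''/h') < beta on the disc (the quotient being defined, i.e. h' nonzero).\<close>
definition classP :: "real \<Rightarrow> (complex \<Rightarrow> complex) set" where
  "classP \<beta> = {f. \<exists>h g. h holomorphic_on unit_disc \<and> g holomorphic_on unit_disc \<and>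
      (\<forall>z\<in>unit_disc. f z = h z + cnj (g z)) \<and>
      h 0 = 0 \<and> g 0 = 0 \<and> deriv h 0 = 1 \<and>
      (\<forall>z\<in>unit_disc. deriv g z = z * deriv h z) \<and>
      (\<forall>z\<in>unit_disc. deriv h z \<noteq> 0 \<and>
           Re (1 + z * deriv (deriv h) z / deriv h z) < \<beta>)}"

definition h_gamma :: "real \<Rightarrow> complex \<Rightarrow> complex" where
  "h_gamma \<gamma> z = (1 - (1 - z) powr complex_of_real \<gamma>) / complex_of_real \<gamma>"

definition g_gamma :: "real \<Rightarrow> complex \<Rightarrow> complex" where
  "g_gamma \<gamma> z = (1 - (1 + complex_of_real \<gamma> * z) * (1 - z) powr complex_of_real \<gamma>)
                   / complex_of_real (\<gamma> * (1 + \<gamma>))"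

definition f_gamma :: "real \<Rightarrow> complex \<Rightarrow> complex" where
  "f_gamma \<gamma> z = h_gamma \<gamma> z + cnj (g_gamma \<gamma> z)"

end

theory Submission
  imports Defs
begin

text \<open>Here h' = (1 - z) powr (\<gamma> - 1) and g' = z h', so z h''/h' = (1 - \<gamma>) z/(1 - z); since
  z/(1 - z) maps the unit disc onto the half plane Re > -1/2, this gives
  Re (1 + z h''/h') < (1 + \<gamma>)/2.
  For non-univalence substitute z = 1 - w: up to an additive constant,
  f_gamma (1 - w) = - 2 Re (w powr \<gamma>)/\<gamma> + cnj (w powr (\<gamma> + 1))/(1 + \<gamma>), which is invariant
  under w \<mapsto> cnj w as soon as w powr (\<gamma> + 1) is real. The point w = cos \<theta> e^(i\<theta>) with
  \<theta> = pi/(1 + \<gamma>) has this property, and |1 - w| = sin \<theta> < 1, so 1 - w and 1 - cnj w are two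
  distinct points of the disc with the same image.\<close>

lemma Re_divide_one_minus_gt:
  assumes "norm z < 1"
  shows "- 1/2 < Re (z / (1 - z))"
proof -
  let ?x = "Re z" and ?y = "Im z"
  have norm_sq: "?x^2 + ?y^2 < 1" using assms by (simp add: cmod_def)
  have "?x < 1" using complex_Re_le_cmod[of z] assms by simp
  then have denom_pos: "0 < (1 - ?x)^2 + ?y^2"
    by (simp add: sum_power2_gt_zero_iff)
  have "Re (z / (1 - z)) = (?x * (1 - ?x) - ?y^2) / ((1 - ?x)^2 + ?y^2)"
    by (simp add: Re_divide power2_eq_square)
  also have "\<dots> > - 1/2" using denom_pos norm_sq
    by (simp add: less_divide_eq power2_eq_square algebra_simps)
  finally show ?thesis .
qed

lemma one_minus_notin_nonpos_Reals: "Re z < 1 \<Longrightarrow> 1 - z \<notin> \<real>\<^sub>\<le>\<^sub>0"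
  by (auto simp: complex_nonpos_Reals_iff)

lemma powr_add_one: "(w::complex) \<noteq> 0 \<Longrightarrow> w powr (c + 1) = w powr c * w"
  by (simp add: powr_add)

lemma has_field_derivative_one_minus_powr:
  assumes "Re z < 1"
  shows "((\<lambda>z. (1 - z) powr s) has_field_derivative - (s * (1 - z) powr (s - 1))) (at z)"
  using one_minus_notin_nonpos_Reals[OF assms] by (auto intro!: derivative_eq_intros)

lemma has_field_derivative_h_gamma:
  assumes "Re z < 1" "\<gamma> \<noteq> 0"
  shows "(h_gamma \<gamma> has_field_derivative (1 - z) powr (of_real \<gamma> - 1)) (at z)"
  unfolding h_gamma_def[abs_def]
  using one_minus_notin_nonpos_Reals[OF assms(1)] assms(2)
  by (auto intro!: derivative_eq_intros)

lemma has_field_derivative_g_gamma: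
  assumes "Re z < 1" "\<gamma> \<noteq> 0" "\<gamma> \<noteq> -1"
  shows "(g_gamma \<gamma> has_field_derivative z * (1 - z) powr (of_real \<gamma> - 1)) (at z)"
proof -
  let ?c = "complex_of_real \<gamma>"
  let ?P = "(1 - z) powr (?c - 1)"
  have c_nz: "?c \<noteq> 0" "1 + ?c \<noteq> 0"
    using assms(2,3) by (auto simp: complex_eq_iff)
  have "1 - z \<noteq> 0" using assms(1) by auto
  then have "(1 - z) powr ?c = ?P * (1 - z)"
    using powr_add_one[of "1 - z" "?c - 1"] by simp
  then have numerator: "?c * (1 - z) powr ?c - (1 + ?c * z) * (?c * ?P) = - (?c * (1 + ?c)) * (z * ?P)"
    by (simp only:) (simp add: algebra_simps)
  have "(g_gamma \<gamma> has_field_derivative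
          - (?c * (1 - z) powr ?c - (1 + ?c * z) * (?c * ?P)) / (?c * (1 + ?c))) (at z)"
    unfolding g_gamma_def[abs_def]
    using one_minus_notin_nonpos_Reals[OF assms(1)] c_nz
    by (auto intro!: derivative_eq_intros)
  then show ?thesis
    unfolding numerator using c_nz by simp
qed

lemma h_gamma_curvature_quotient:
  assumes "Re z < 1" "\<gamma> \<noteq> 0"
  shows "z * deriv (deriv (h_gamma \<gamma>)) z / deriv (h_gamma \<gamma>) z = of_real (1 - \<gamma>) * (z / (1 - z))"
proof -
  let ?c = "complex_of_real \<gamma>"
  have deriv_h: "deriv (h_gamma \<gamma>) u = (1 - u) powr (?c - 1)" if "Re u < 1" for u
    using has_field_derivative_h_gamma[OF that assms(2)] by (rule DERIV_imp_deriv)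
  have "deriv (deriv (h_gamma \<gamma>)) z = deriv (\<lambda>u. (1 - u) powr (?c - 1)) z"
    using eventually_nhds_in_open[OF open_halfspace_Re_lt, of z 1] assms(1) deriv_h
    by (intro deriv_cong_ev) (auto elim: eventually_mono)
  also have "\<dots> = - ((?c - 1) * (1 - z) powr (?c - 1 - 1))"
    using has_field_derivative_one_minus_powr[OF assms(1)] by (rule DERIV_imp_deriv)
  finally have deriv2_h: "deriv (deriv (h_gamma \<gamma>)) z = - ((?c - 1) * (1 - z) powr (?c - 1 - 1))" .
  have z_ne: "1 - z \<noteq> 0" using assms(1) by auto
  have split: "(1 - z) powr (?c - 1) = (1 - z) powr (?c - 1 - 1) * (1 - z)"
    using powr_add_one[OF z_ne, of "?c - 1 - 1"] by simp
  show ?thesis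
    unfolding deriv_h[OF assms(1)] deriv2_h split
    using z_ne by (simp add: field_simps)
qed

lemma f_gamma_in_classP:
  assumes "1 < \<gamma>" "(1 + \<gamma>) / 2 \<le> \<beta>"
  shows "f_gamma \<gamma> \<in> classP \<beta>"
proof -
  have \<gamma>_ne: "\<gamma> \<noteq> 0" "\<gamma> \<noteq> -1" using assms(1) by auto
  have Re_lt: "Re z < 1" if "z \<in> unit_disc" for z
    using that complex_Re_le_cmod[of z] by simp
  have deriv_h: "deriv (h_gamma \<gamma>) z = (1 - z) powr (of_real \<gamma> - 1)" if "Re z < 1" for z
    using has_field_derivative_h_gamma[OF that \<gamma>_ne(1)] by (rule DERIV_imp_deriv)
  have deriv_g: "deriv (g_gamma \<gamma>) z = z * (1 - z) powr (of_real \<gamma> - 1)" if "Re z < 1" for z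
    using has_field_derivative_g_gamma[OF that \<gamma>_ne] by (rule DERIV_imp_deriv)
  have "h_gamma \<gamma> holomorphic_on unit_disc" "g_gamma \<gamma> holomorphic_on unit_disc"
    unfolding holomorphic_on_open[OF open_ball]
    using has_field_derivative_h_gamma[OF Re_lt \<gamma>_ne(1)] has_field_derivative_g_gamma[OF Re_lt \<gamma>_ne]
    by blast+
  moreover have "Re (1 + z * deriv (deriv (h_gamma \<gamma>)) z / deriv (h_gamma \<gamma>) z) < \<beta>"
    if "z \<in> unit_disc" for z
  proof -
    have "Re (1 + z * deriv (deriv (h_gamma \<gamma>)) z / deriv (h_gamma \<gamma>) z)
          = 1 + (1 - \<gamma>) * Re (z / (1 - z))"
      unfolding h_gamma_curvature_quotient[OF Re_lt[OF that] \<gamma>_ne(1)]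
      by (simp del: of_real_diff times_divide_eq_right)
    also have "\<dots> < 1 + (\<gamma> - 1) / 2"
      using mult_strict_left_mono[OF Re_divide_one_minus_gt[of z], of "\<gamma> - 1"] that assms(1)
      by (simp add: algebra_simps)
    also have "\<dots> \<le> \<beta>" using assms(2) by (simp add: field_simps)
    finally show ?thesis .
  qed
  moreover have "deriv (h_gamma \<gamma>) z \<noteq> 0" if "Re z < 1" for z
    using deriv_h[OF that] that by auto
  ultimately show ?thesis
    unfolding classP_def
    by (intro CollectI exI[of _ "h_gamma \<gamma>"] exI[of _ "g_gamma \<gamma>"])
       (auto simp: f_gamma_def h_gamma_def g_gamma_def deriv_h deriv_g Re_lt)
qed

lemma g_gamma_one_minus:
  assumes "w \<noteq> 0" "\<gamma> \<noteq> 0" "\<gamma> \<noteq> -1"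
  shows "g_gamma \<gamma> (1 - w) = 1 / of_real (\<gamma> * (1 + \<gamma>)) - w powr of_real \<gamma> / of_real \<gamma>
                             + w powr (of_real \<gamma> + 1) / (1 + of_real \<gamma>)"
proof -
  have "complex_of_real \<gamma> \<noteq> 0" "1 + complex_of_real \<gamma> \<noteq> 0"
    using assms(2,3) by (auto simp: complex_eq_iff)
  then show ?thesis
    using powr_add_one[OF assms(1), of "of_real \<gamma>"] by (simp add: g_gamma_def field_simps)
qed

lemma f_gamma_one_minus_cnj:
  assumes "0 < Re w" "Im (w powr (of_real \<gamma> + 1)) = 0" "\<gamma> \<noteq> 0" "\<gamma> \<noteq> -1"
  shows "f_gamma \<gamma> (1 - cnj w) = f_gamma \<gamma> (1 - w)"
proof -
  let ?c = "complex_of_real \<gamma>"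
  have w_nz: "w \<noteq> 0" "cnj w \<noteq> 0" using assms(1) by auto
  have cnj_power: "cnj w powr ?c = cnj (w powr ?c)"
    using assms(1) by (simp add: cnj_powr)
  have "cnj w powr (?c + 1) = cnj (w powr (?c + 1))"
    using assms(1) by (simp add: cnj_powr)
  then have real_power: "cnj w powr (?c + 1) = w powr (?c + 1)"
    using assms(2) by (simp add: complex_eq_iff)
  show ?thesis
    unfolding f_gamma_def h_gamma_def g_gamma_one_minus[OF w_nz(1) assms(3,4)]
      g_gamma_one_minus[OF w_nz(2) assms(3,4)]
    using cnj_power real_power by (simp add: algebra_simps diff_divide_distrib)
qed

lemma exists_powr_real_in_one_minus_disc:
  assumes "2 < s"
  shows "\<exists>w. 0 < Re w \<and> 0 < Im w \<and> norm (1 - w) < 1 \<and> Im (w powr of_real s) = 0"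
proof -
  define \<theta> where "\<theta> = pi / s"
  define r where "r = cos \<theta>"
  define L where "L = complex_of_real (ln r) + \<i> * of_real \<theta>"
  define w where "w = exp L"
  have "0 < \<theta>" "\<theta> < pi / 2"
    using assms by (auto simp: \<theta>_def field_simps)
  then have r_pos: "0 < r" and sin_pos: "0 < sin \<theta>"
    unfolding r_def by (auto intro!: cos_gt_zero sin_gt_zero)
  have Re_w: "Re w = r * cos \<theta>" and Im_w: "Im w = r * sin \<theta>"
    using r_pos by (simp_all add: w_def L_def Re_exp Im_exp)
  have "Ln w = L"
    unfolding w_def using \<open>0 < \<theta>\<close> \<open>\<theta> < pi / 2\<close> by (intro Ln_exp) (auto simp: L_def)
  then have "w powr of_real s = exp (of_real s * L)"
    by (simp add: powr_def w_def)
  moreover have "Im (of_real s * L) = pi"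
    using assms by (simp add: L_def \<theta>_def)
  ultimately have "Im (w powr of_real s) = 0"
    by (simp add: Im_exp)
  moreover have "norm (1 - w)^2 = 1 - r^2"
  proof -
    have "norm (1 - w)^2 = (1 - r * cos \<theta>)^2 + (r * sin \<theta>)^2"
      by (simp add: cmod_power2 Re_w Im_w)
    also have "\<dots> = 1 - r^2"
      unfolding r_def power_mult_distrib sin_squared_eq by (simp add: power2_eq_square algebra_simps)
    finally show ?thesis .
  qed
  then have "norm (1 - w) < 1"
    using r_pos abs_square_less_1[of "norm (1 - w)"] by simp
  ultimately show ?thesis
    using r_pos \<open>0 < \<theta>\<close> \<open>\<theta> < pi / 2\<close> sin_pos
    by (intro exI[of _ w]) (auto simp: Re_w Im_w r_def)
qed

lemma f_gamma_not_inj_on_disc: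
  assumes "1 < \<gamma>"
  shows "\<not> inj_on (f_gamma \<gamma>) unit_disc"
proof -
  obtain w where w: "0 < Re w" "0 < Im w" "norm (1 - w) < 1"
    and real_power: "Im (w powr of_real (\<gamma> + 1)) = 0"
    using exists_powr_real_in_one_minus_disc[of "\<gamma> + 1"] assms by auto
  have "f_gamma \<gamma> (1 - cnj w) = f_gamma \<gamma> (1 - w)"
    using f_gamma_one_minus_cnj[OF w(1)] real_power assms by auto
  moreover have "1 - cnj w \<noteq> 1 - w"
    using w(2) by (auto simp: complex_eq_iff)
  moreover have "norm (1 - cnj w) < 1"
    using w(3) by (metis complex_cnj_diff complex_cnj_one complex_mod_cnj)
  ultimately show ?thesis
    using w(3) unfolding inj_on_def by (metis mem_ball_0)
qed

theorem mainTheorem1: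
  shows "(\<forall>\<beta>::real. 1 < \<beta> \<and> \<beta> \<le> 11/8 \<longrightarrow>
            (\<exists>f\<in>classP \<beta>. \<not> inj_on f unit_disc)) \<and>
         (\<forall>\<gamma>::real. 1 < \<gamma> \<and> \<gamma> \<le> 7/4 \<longrightarrow>
            (\<forall>\<beta>::real. (1 + \<gamma>) / 2 \<le> \<beta> \<longrightarrow> f_gamma \<gamma> \<in> classP \<beta>) \<and>
            \<not> inj_on (f_gamma \<gamma>) unit_disc)"
proof (intro conjI allI impI)
  fix \<beta> :: real
  assume "1 < \<beta> \<and> \<beta> \<le> 11/8"
  then have "1 < 2 * \<beta> - 1" by simp
  then show "\<exists>f\<in>classP \<beta>. \<not> inj_on f unit_disc"
    using f_gamma_in_classP[of "2 * \<beta> - 1" \<beta>] f_gamma_not_inj_on_disc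
    by (intro bexI[of _ "f_gamma (2 * \<beta> - 1)"]) auto
qed (use f_gamma_in_classP f_gamma_not_inj_on_disc in auto)

end
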